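(* The mechanism given by Algorithm 2 (defined in the context) is envy-free and risk-averse truthful, for any number $n\ge2$ of agents with piecewise-constant value density functions.
   Context: All value densities are piecewise-constant functions $[0,1]\to\mathbb{R}_{\ge0}$; $v_i(X)=\int_X f_i$. Algorithm 2: given reported $f_1,\dots,f_n$, let $X$ be the union over $i$ of the points of $(0,1)$ at which $f_i$ is discontinuous, sorted as $x_1<\dots<x_{m-1}$, with $x_0=0$, $x_m=1$. For each $j=0,\dots,m-1$ and each agent $i\in\{1,\dots,n\}$, let $k=(i+j-1)\bmod n\in\{0,\dots,n-1\}$; agent $i$ receives $[x_j+\frac{k}{n}(x_{j+1}-x_j),\,x_j+\frac{k+1}{n}(x_{j+1}-x_j))$; $A_i$ is the union over $j$ of these pieces. An allocation is envy-free if $v_i(A_i)\ge v_i(A_j)$ for all $i,j$ (w.r.t. reported densities). A mechanism $\mathcal{M}$ is risk-averse truthful if for each agent $i$, each true density $f_i$ and each report $f_i'$, at least one holds: (1) for all reports $f_{-i}=(f_j)_{j\ne i}$ of the others, $v_i(\mathcal{M}_i(f_i,f_{-i}))\ge v_i(\mathcal{M}_i(f_i',f_{-i}))$; (2) there exist $f_{-i}$ with $v_i(\mathcal{M}_i(f_i',f_{-i}))<\frac1n v_i([0,1])$ (utilities w.r.t. the true $f_i$). *)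

theory Defs
  imports "HOL-Analysis.Analysis"
begin

definition piecewise_const_density :: "(real \<Rightarrow> real) \<Rightarrow> bool" where
  "piecewise_const_density f \<longleftrightarrow>
     (\<forall>x\<in>{0..1}. 0 \<le> f x) \<and>
     (\<exists>S. finite S \<and>
        (\<forall>x y. 0 \<le> x \<longrightarrow> x \<le> y \<longrightarrow> y \<le> 1 \<longrightarrow> {x..y} \<inter> S = {} \<longrightarrow> f x = f y))"

definition val :: "(real \<Rightarrow> real) \<Rightarrow> real set \<Rightarrow> real" where
  "val f X = integral X f"

definition disc_points :: "(real \<Rightarrow> real) \<Rightarrow> real set" where
  "disc_points f = {x \<in> {0<..<1}. \<not> isCont f x}"

definition breakpoints :: "nat \<Rightarrow> (nat \<Rightarrow> real \<Rightarrow> real) \<Rightarrow> real list" where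
  "breakpoints n fs = [0] @ sorted_list_of_set (\<Union>i\<in>{1..n}. disc_points (fs i)) @ [1]"

text \<open>Algorithm 2: allocation of agent i (agents are 1..n).\<close>
definition alg2 :: "nat \<Rightarrow> (nat \<Rightarrow> real \<Rightarrow> real) \<Rightarrow> nat \<Rightarrow> real set" where
  "alg2 n fs i =
     (let xs = breakpoints n fs; m = length xs - 1 in
      \<Union>j<m. (let k = (i + j - 1) mod n; a = xs ! j; b = xs ! (j + 1) in
              {a + real k / real n * (b - a) ..< a + real (k + 1) / real n * (b - a)}))"

definition envy_free_mech :: "nat \<Rightarrow> ((nat \<Rightarrow> real \<Rightarrow> real) \<Rightarrow> nat \<Rightarrow> real set) \<Rightarrow> bool" where
  "envy_free_mech n M \<longleftrightarrow>
     (\<forall>fs. (\<forall>i\<in>{1..n}. piecewise_const_density (fs i)) \<longrightarrow>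
        (\<forall>i\<in>{1..n}. \<forall>j\<in>{1..n}. val (fs i) (M fs i) \<ge> val (fs i) (M fs j)))"

definition risk_averse_truthful :: "nat \<Rightarrow> ((nat \<Rightarrow> real \<Rightarrow> real) \<Rightarrow> nat \<Rightarrow> real set) \<Rightarrow> bool" where
  "risk_averse_truthful n M \<longleftrightarrow>
     (\<forall>i\<in>{1..n}. \<forall>f f'. piecewise_const_density f \<longrightarrow> piecewise_const_density f' \<longrightarrow>
        ((\<forall>fs. (\<forall>j\<in>{1..n} - {i}. piecewise_const_density (fs j)) \<longrightarrow>
              val f (M (fs(i := f)) i) \<ge> val f (M (fs(i := f')) i))
         \<or>
         (\<exists>fs. (\<forall>j\<in>{1..n} - {i}. piecewise_const_density (fs j)) \<and>
              val f (M (fs(i := f')) i) < 1 / real n * val f {0..1})))"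

end

theory Submission
  imports Defs
begin

(* On each interval between consecutive breakpoints every reported density is constant
   except at finitely many points, and every agent receives a 1/n-th subinterval of it.
   Hence every reported density values every bundle at exactly 1/n of [0,1]: the
   allocation is envy-free, and truth-telling always yields the proportional share.
   If some misreport f' ever yields more, the true density f has a jump d that is not a
   breakpoint of f'. The other agents can then report a density whose breakpoints isolate
   d in a short interval [a,b] and, through decoy breakpoints to the left of a, rotate
   the cyclic assignment so that the misreporting agent's piece of [a,b] is centred at d
   on the worse side of the jump. That agent then gets strictly less than 1/n of the value
   of [a,b] and exactly 1/n of every other interval. *)


lemma sorted_wrt_less_nth_mono:
  fixes xs :: "'a :: linorder list"
  shows "sorted_wrt (<) xs \<Longrightarrow> i \<le> j \<Longrightarrow> j < length xs \<Longrightarrow> xs ! i \<le> xs ! j"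
  by (metis le_less sorted_wrt_nth_less)

lemma card_less_nth_sorted:
  fixes xs :: "'a :: linorder list"
  assumes "sorted_wrt (<) xs" "j < length xs"
  shows "card {p \<in> set xs. p < xs ! j} = j"
proof -
  have "{p \<in> set xs. p < xs ! j} = (!) xs ` {..<j}"
  proof (intro equalityI subsetI)
    fix p assume "p \<in> {p \<in> set xs. p < xs ! j}"
    then obtain q where "q < length xs" "p = xs ! q" "xs ! q < xs ! j"
      by (auto simp: in_set_conv_nth)
    moreover have "q < j"
      using calculation assms sorted_wrt_nth_less[OF assms(1), of j q] by (metis not_less_iff_gr_or_eq order.asym)
    ultimately show "p \<in> (!) xs ` {..<j}" by auto
  qed (use assms sorted_wrt_nth_less in fastforce)
  moreover have "inj_on ((!) xs) {..<j}"
    by (rule inj_on_nth) (use assms strict_sorted_iff in auto)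
  ultimately show ?thesis by (simp add: card_image)
qed

lemma nth_card_less_sorted:
  fixes xs :: "'a :: linorder list"
  assumes "sorted_wrt (<) xs" "a \<in> set xs"
  shows "card {p \<in> set xs. p < a} < length xs" "xs ! card {p \<in> set xs. p < a} = a"
  using assms card_less_nth_sorted[OF assms(1)] by (auto simp: in_set_conv_nth)

lemma sorted_nth_gap:
  fixes xs :: "'a :: linorder list"
  assumes "sorted_wrt (<) xs" "j + 1 < length xs" "x \<in> set xs"
  shows "x \<notin> {xs ! j<..<xs ! (j + 1)}"
proof
  assume x: "x \<in> {xs ! j<..<xs ! (j + 1)}"
  obtain q where q: "q < length xs" "x = xs ! q"
    using assms(3) by (auto simp: in_set_conv_nth)
  show False
  proof (cases "q \<le> j")
    case True
    then show False using sorted_wrt_less_nth_mono[OF assms(1) True] q x assms(2) by (simp add: leD)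
  next
    case False
    then have "j + 1 \<le> q" by simp
    then show False using sorted_wrt_less_nth_mono[OF assms(1)] q x by fastforce
  qed
qed

lemma sorted_nth_gaps_disjoint:
  fixes xs :: "'a :: linorder list"
  assumes "sorted_wrt (<) xs" "i + 1 < length xs" "j + 1 < length xs"
    "x \<in> {xs ! i<..<xs ! (i + 1)}" "x \<in> {xs ! j<..<xs ! (j + 1)}"
  shows "i = j"
proof (rule ccontr)
  have "xs ! (i + 1) \<le> xs ! j" if "i < j" "j < length xs" for i j
    using that sorted_wrt_less_nth_mono[OF assms(1), of "i + 1" j] by simp
  moreover assume "i \<noteq> j"
  ultimately show False
    using assms by (metis greaterThanLessThan_iff add_lessD1 leD less_trans linorder_neqE_nat)
qed

section \<open>Functions constant off a finite set\<close>

definition const_off_finite :: "(real \<Rightarrow> real) \<Rightarrow> real set \<Rightarrow> real \<Rightarrow> bool" where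
  "const_off_finite f A c \<longleftrightarrow> (\<exists>F. finite F \<and> (\<forall>x\<in>A - F. f x = c))"

lemma const_off_finite_subset:
  "const_off_finite f A c \<Longrightarrow> B \<subseteq> A \<Longrightarrow> const_off_finite f B c"
  unfolding const_off_finite_def by blast

lemma const_off_finite_Un:
  "const_off_finite f A c \<Longrightarrow> const_off_finite f B c \<Longrightarrow> const_off_finite f (A \<union> B) c"
  unfolding const_off_finite_def by (metis Diff_iff Un_iff finite_UnI)

lemma const_off_finite_insert:
  "const_off_finite f A c \<Longrightarrow> const_off_finite f (insert x A) c"
  unfolding const_off_finite_def by (metis Diff_iff finite_insert insert_iff)

lemma has_integral_const_off_finite:
  fixes h :: "real \<Rightarrow> real"
  assumes "a \<le> b" "const_off_finite h {a<..<b} c"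
  shows "(h has_integral c * (b - a)) {a..b}"
proof -
  obtain F where F: "finite F" "\<forall>x\<in>{a<..<b} - F. h x = c"
    using assms(2) unfolding const_off_finite_def by blast
  have "((\<lambda>x. c) has_integral c * (b - a)) {a..b}"
    using has_integral_const_real[of c a b] assms(1) by (simp add: mult.commute)
  then show ?thesis
    by (rule has_integral_spike_finite[where S = "F \<union> {a, b}", rotated 2]) (use F in auto)
qed

lemma has_integral_atLeastLessThan_iff:
  fixes h :: "real \<Rightarrow> real"
  shows "(h has_integral I) {a..<b} \<longleftrightarrow> (h has_integral I) {a..b}"
  by (rule has_integral_spike_set_eq; rule negligible_subset[of "{b}"]) auto

lemma has_integral_step:
  fixes h :: "real \<Rightarrow> real"
  assumes "s \<le> d" "d \<le> t" "const_off_finite h {s<..<d} L" "const_off_finite h {d<..<t} R"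
  shows "(h has_integral L * (d - s) + R * (t - d)) {s..t}"
  using has_integral_combine[OF assms(1,2) has_integral_const_off_finite has_integral_const_off_finite]
    assms by blast

lemma tendsto_const_off_finite:
  assumes "const_off_finite f A L" "eventually (\<lambda>x. x \<in> A) (at d within S)"
  shows "(f \<longlongrightarrow> L) (at d within S)"
proof -
  obtain F where F: "finite F" "\<forall>x\<in>A - F. f x = L"
    using assms(1) unfolding const_off_finite_def by blast
  have "\<forall>p\<in>F. eventually (\<lambda>x. x \<noteq> p) (at d within S)"
    by (simp add: eventually_neq_at_within)
  then have "eventually (\<lambda>x. \<forall>p\<in>F. x \<noteq> p) (at d within S)"
    by (rule eventually_ball_finite[OF F(1)])
  with assms(2) have "eventually (\<lambda>x. f x = L) (at d within S)"
    by eventually_elim (use F(2) in blast)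
  then show ?thesis by (rule tendsto_eventually)
qed

definition changes_only_at :: "real set \<Rightarrow> (real \<Rightarrow> real) \<Rightarrow> real \<Rightarrow> real \<Rightarrow> bool" where
  "changes_only_at T f a b \<longleftrightarrow>
     (\<forall>x y. a < x \<longrightarrow> x \<le> y \<longrightarrow> y < b \<longrightarrow> {x..y} \<inter> T = {} \<longrightarrow> f x = f y)"

definition jump_at :: "(real \<Rightarrow> real) \<Rightarrow> real \<Rightarrow> bool" where
  "jump_at f d \<longleftrightarrow> (\<exists>e>0. \<exists>L R. L \<noteq> R \<and>
     const_off_finite f {d - e<..<d} L \<and> const_off_finite f {d<..<d + e} R)"

lemma changes_only_at_mono:
  assumes "changes_only_at T f a b" "a \<le> a'" "b' \<le> b" "T \<inter> {a'<..<b'} \<subseteq> T'"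
  shows "changes_only_at T' f a' b'"
  unfolding changes_only_at_def
proof (intro allI impI)
  fix x y assume xy: "a' < x" "x \<le> y" "y < b'" "{x..y} \<inter> T' = {}"
  then have "{x..y} \<inter> T = {}" using assms(4) by auto
  moreover have "a < x" "y < b" using xy assms(2,3) by simp_all
  ultimately show "f x = f y" using assms(1) xy(2) unfolding changes_only_at_def by blast
qed

lemma changes_only_at_const:
  assumes "changes_only_at T f a b" "T \<inter> {a<..<b} = {}" "x \<in> {a<..<b}" "y \<in> {a<..<b}"
  shows "f x = f y"
proof -
  have "f u = f v" if "u \<le> v" "u \<in> {a<..<b}" "v \<in> {a<..<b}" for u v
    using assms(1,2) that unfolding changes_only_at_def by fastforce
  then show ?thesis using assms(3,4) by (metis linear)
qed

lemma changes_only_at_const_off_finite: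
  assumes "changes_only_at T f a b" "T \<inter> {a<..<b} = {}"
  shows "\<exists>c. const_off_finite f {a<..<b} c"
proof (cases "a < b")
  case True
  then have "const_off_finite f {a<..<b} (f ((a + b) / 2))"
    using changes_only_at_const[OF assms] unfolding const_off_finite_def by force
  then show ?thesis by blast
qed (auto simp: const_off_finite_def)

lemma const_or_jump_split:
  assumes "a < t" "t < b" "const_off_finite f {a<..<t} c1" "const_off_finite f {t<..<b} c2"
  shows "(\<exists>c. const_off_finite f {a<..<b} c) \<or> jump_at f t"
proof (cases "c1 = c2")
  case True
  have "{a<..<b} \<subseteq> {a<..<t} \<union> insert t {t<..<b}" by auto
  then show ?thesis
    using const_off_finite_Un[OF assms(3)[unfolded True] const_off_finite_insert[OF assms(4)]]
    by (metis const_off_finite_subset)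
next
  case False
  let ?e = "min (t - a) (b - t)"
  have "const_off_finite f {t - ?e<..<t} c1" "const_off_finite f {t<..<t + ?e} c2"
    by (rule const_off_finite_subset[OF assms(3)], force,
        rule const_off_finite_subset[OF assms(4)], force)
  moreover have "?e > 0" using assms(1,2) by simp
  ultimately show ?thesis using False unfolding jump_at_def by blast
qed

lemma const_or_jump:
  assumes "finite T" "changes_only_at T f a b"
  shows "(\<exists>c. const_off_finite f {a<..<b} c) \<or> (\<exists>d\<in>{a<..<b}. jump_at f d)"
  using assms
proof (induction T arbitrary: a b rule: finite_induct)
  case empty
  then show ?case using changes_only_at_const_off_finite by blast
next
  case (insert t T)
  show ?case
  proof (cases "t \<in> {a<..<b}")
    case False
    then show ?thesis
      using insert.IH changes_only_at_mono[OF insert.prems, of a b T] by blast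
  next
    case True
    have "changes_only_at T f a t" "changes_only_at T f t b"
      by (rule changes_only_at_mono[OF insert.prems]; use True in auto)+
    then consider "\<exists>d\<in>{a<..<t} \<union> {t<..<b}. jump_at f d"
      | c1 c2 where "const_off_finite f {a<..<t} c1" "const_off_finite f {t<..<b} c2"
      using insert.IH[of a t] insert.IH[of t b] by blast
    then show ?thesis
    proof cases
      case 1
      then show ?thesis using True by auto
    next
      case 2
      then show ?thesis using True const_or_jump_split[OF _ _ 2] by auto
    qed
  qed
qed

lemma jump_at_not_isCont:
  assumes "jump_at f d"
  shows "\<not> isCont f d"
proof
  assume "isCont f d"
  then have "(f \<longlongrightarrow> f d) (at_left d) \<and> (f \<longlongrightarrow> f d) (at_right d)"
    by (simp add: filterlim_at_split[symmetric] isContD)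
  moreover obtain e L R where e: "e > 0" "L \<noteq> R"
    and L: "const_off_finite f {d - e<..<d} L" and R: "const_off_finite f {d<..<d + e} R"
    using assms unfolding jump_at_def by blast
  have "(f \<longlongrightarrow> L) (at_left d)"
    using tendsto_const_off_finite[OF L] eventually_at_left_real[of "d - e" d] e(1) by simp
  moreover have "(f \<longlongrightarrow> R) (at_right d)"
    using tendsto_const_off_finite[OF R] eventually_at_right_real[of d "d + e"] e(1) by simp
  ultimately have "f d = L" "f d = R"
    using tendsto_unique[OF trivial_limit_at_left_real]
      tendsto_unique[OF trivial_limit_at_right_real] by blast+
  with e(2) show False by simp
qed

section \<open>Piecewise constant densities\<close>

lemma piecewise_const_density_changes_only_at:
  assumes "piecewise_const_density f"
  obtains S where "finite S" "changes_only_at S f 0 1"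
proof -
  obtain S where "finite S"
    "\<forall>x y. 0 \<le> x \<longrightarrow> x \<le> y \<longrightarrow> y \<le> 1 \<longrightarrow> {x..y} \<inter> S = {} \<longrightarrow> f x = f y"
    using assms unfolding piecewise_const_density_def by blast
  moreover from this(2) have "changes_only_at S f 0 1"
    unfolding changes_only_at_def by (meson less_imp_le)
  ultimately show thesis using that by blast
qed

lemma disc_points_subset:
  assumes "changes_only_at S f 0 1" "finite S"
  shows "disc_points f \<subseteq> S"
proof
  fix x assume "x \<in> disc_points f"
  then have x: "x \<in> {0<..<1}" "\<not> isCont f x" unfolding disc_points_def by auto
  show "x \<in> S"
  proof (rule ccontr)
    assume "x \<notin> S"
    have "open ({0<..<1} - S)"
      using open_Diff[OF open_greaterThanLessThan finite_imp_closed[OF assms(2)]] .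
    moreover have "x \<in> {0<..<1} - S" using x(1) \<open>x \<notin> S\<close> by simp
    ultimately obtain e where e: "e > 0" "ball x e \<subseteq> {0<..<1} - S"
      by (rule openE)
    then have sub: "{x - e<..<x + e} \<subseteq> {0<..<1} - S"
      by (simp add: ball_eq_greaterThanLessThan)
    then have "{x - e<..<x + e} \<subseteq> {0<..<1}" by blast
    then have "0 \<le> x - e" "x + e \<le> 1"
      using e(1) greaterThanLessThan_subseteq_greaterThanLessThan[of "x - e" "x + e" 0 1] by simp_all
    then have ch: "changes_only_at S f (x - e) (x + e)"
      using changes_only_at_mono[OF assms(1) _ _ Int_lower1] by blast
    have avoid: "S \<inter> {x - e<..<x + e} = {}" using sub by blast
    have x_in: "x \<in> {x - e<..<x + e}" using e(1) by simp
    then have "\<forall>y\<in>{x - e<..<x + e}. f y = f x"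
      using changes_only_at_const[OF ch avoid] by blast
    then have "eventually (\<lambda>y. f y = f x) (nhds x)"
      unfolding eventually_nhds using x_in open_greaterThanLessThan by blast
    then have "isCont f x"
      using isCont_cong[where g = "\<lambda>_. f x"] by simp
    with x(2) show False ..
  qed
qed

lemma finite_disc_points:
  assumes "piecewise_const_density f"
  shows "finite (disc_points f)"
proof -
  obtain S where "finite S" "changes_only_at S f 0 1"
    using piecewise_const_density_changes_only_at[OF assms] .
  then show ?thesis using disc_points_subset finite_subset by blast
qed

lemma piecewise_const_density_const_or_jump:
  assumes "piecewise_const_density f" "0 \<le> a" "b \<le> 1"
  shows "(\<exists>c. const_off_finite f {a<..<b} c) \<or> (\<exists>d\<in>{a<..<b}. d \<in> disc_points f \<and> jump_at f d)"
proof -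
  obtain S where S: "finite S" "changes_only_at S f 0 1"
    using piecewise_const_density_changes_only_at[OF assms(1)] .
  have "changes_only_at S f a b"
    using changes_only_at_mono[OF S(2) assms(2,3) Int_lower1] .
  then have "(\<exists>c. const_off_finite f {a<..<b} c) \<or> (\<exists>d\<in>{a<..<b}. jump_at f d)"
    by (rule const_or_jump[OF S(1)])
  moreover have "d \<in> disc_points f" if "d \<in> {a<..<b}" "jump_at f d" for d
    using that assms(2,3) jump_at_not_isCont unfolding disc_points_def by auto
  ultimately show ?thesis by blast
qed

definition count_below :: "real set \<Rightarrow> real \<Rightarrow> real" where
  "count_below D x = real (card {p \<in> D. p \<le> x})"

lemma count_below_eq:
  assumes "x \<le> y" "{x..y} \<inter> D = {}"
  shows "count_below D x = count_below D y"
proof -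
  have "{p \<in> D. p \<le> x} = {p \<in> D. p \<le> y}"
    using assms by (auto intro: order_trans) (meson atLeastAtMost_iff disjoint_iff linorder_le_cases)
  then show ?thesis unfolding count_below_def by simp
qed

lemma piecewise_const_density_count_below:
  "finite D \<Longrightarrow> piecewise_const_density (count_below D)"
  unfolding piecewise_const_density_def using count_below_eq
  by (auto simp: count_below_def)

lemma disc_points_count_below:
  assumes "finite D" "D \<subseteq> {0<..<1}"
  shows "disc_points (count_below D) = D"
proof
  show "disc_points (count_below D) \<subseteq> D"
    by (rule disc_points_subset[OF _ assms(1)]) (simp add: changes_only_at_def count_below_eq)
  show "D \<subseteq> disc_points (count_below D)"
  proof
    fix p assume p: "p \<in> D"
    have "count_below D y \<le> count_below D p - 1" if "y < p" for y
    proof -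
      have "p \<in> {q \<in> D. q \<le> p} - {q \<in> D. q \<le> y}" using that p by simp
      moreover have "{q \<in> D. q \<le> y} \<subseteq> {q \<in> D. q \<le> p}" using that by auto
      ultimately have "{q \<in> D. q \<le> y} \<subset> {q \<in> D. q \<le> p}" by blast
      then have "card {q \<in> D. q \<le> y} < card {q \<in> D. q \<le> p}"
        using assms(1) by (intro psubset_card_mono) auto
      then show ?thesis unfolding count_below_def by linarith
    qed
    then have "eventually (\<lambda>y. count_below D y \<le> count_below D p - 1) (at_left p)"
      by (simp add: eventually_at_left_field) (meson lt_ex)
    then have "\<not> (count_below D \<longlongrightarrow> count_below D p) (at_left p)"
      using tendsto_upperbound[of "count_below D" "count_below D p" "at_left p"] by force
    then have "\<not> isCont (count_below D) p"
      by (meson filterlim_at_split isContD)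
    then show "p \<in> disc_points (count_below D)"
      using p assms(2) unfolding disc_points_def by auto
  qed
qed

section \<open>Values of the pieces of the allocation\<close>

definition piece :: "nat \<Rightarrow> real \<Rightarrow> real \<Rightarrow> nat \<Rightarrow> real set" where
  "piece n a b k = {a + real k / real n * (b - a) ..< a + real (k + 1) / real n * (b - a)}"

lemma alg2_eq_Union_piece:
  "alg2 n fs p = (let xs = breakpoints n fs in
     \<Union>j<length xs - 1. piece n (xs ! j) (xs ! (j + 1)) ((p + j - 1) mod n))"
  unfolding alg2_def piece_def Let_def by simp

lemma piece_bounds:
  fixes a b :: real
  assumes "a \<le> b" "k < n"
  shows "a \<le> a + real k / real n * (b - a)"
    and "a + real (k + 1) / real n * (b - a) \<le> b"
    and "(a + real (k + 1) / real n * (b - a)) - (a + real k / real n * (b - a)) = (b - a) / real n"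
proof -
  have "real (k + 1) / real n \<le> 1"
    using assms(2) by (simp add: divide_le_eq)
  then have "real (k + 1) / real n * (b - a) \<le> 1 * (b - a)"
    using assms(1) by (intro mult_right_mono) simp_all
  then show "a + real (k + 1) / real n * (b - a) \<le> b" by simp
  show "a \<le> a + real k / real n * (b - a)" using assms(1) by simp
  show "(a + real (k + 1) / real n * (b - a)) - (a + real k / real n * (b - a)) = (b - a) / real n"
    using assms(2) by (simp add: field_simps)
qed

lemma piece_subset:
  "a \<le> b \<Longrightarrow> k < n \<Longrightarrow> piece n a b k \<subseteq> {a..<b}"
  unfolding piece_def using piece_bounds[of a b k n] by auto

lemma has_integral_piece:
  fixes h :: "real \<Rightarrow> real"
  assumes "a \<le> b" "k < n" "const_off_finite h {a<..<b} c"
  shows "(h has_integral c * (b - a) / real n) (piece n a b k)"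
proof -
  let ?lo = "a + real k / real n * (b - a)" and ?hi = "a + real (k + 1) / real n * (b - a)"
  note bounds = piece_bounds[OF assms(1,2)]
  have "0 \<le> ?hi - ?lo" unfolding bounds(3) using assms(1) by simp
  then have "?lo \<le> ?hi" by simp
  moreover have "const_off_finite h {?lo<..<?hi} c"
    by (rule const_off_finite_subset[OF assms(3)]) (use bounds in auto)
  ultimately have "(h has_integral c * (?hi - ?lo)) {?lo..?hi}"
    by (rule has_integral_const_off_finite)
  then show ?thesis
    unfolding piece_def has_integral_atLeastLessThan_iff bounds(3) by simp
qed

lemma has_integral_sorted_intervals:
  fixes h :: "real \<Rightarrow> real"
  assumes "sorted_wrt (<) xs" "length xs = Suc m"
    "\<And>j. j < m \<Longrightarrow> (h has_integral I j) {xs ! j..xs ! (j + 1)}"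
  shows "(h has_integral (\<Sum>j<m. I j)) {xs ! 0..xs ! m}"
proof -
  have "(h has_integral (\<Sum>j<q. I j)) {xs ! 0..xs ! q}" if "q \<le> m" for q
    using that
  proof (induction q)
    case 0
    then show ?case using has_integral_refl(2) by simp
  next
    case (Suc q)
    have "xs ! 0 \<le> xs ! q" "xs ! q \<le> xs ! Suc q"
      using sorted_wrt_less_nth_mono[OF assms(1)] Suc.prems assms(2) by simp_all
    moreover have "(h has_integral (\<Sum>j<q. I j)) {xs ! 0..xs ! q}"
      using Suc by simp
    moreover have "(h has_integral I q) {xs ! q..xs ! Suc q}"
      using assms(3) Suc.prems by simp
    ultimately show ?case
      by (simp add: has_integral_combine)
  qed
  then show ?thesis by simp
qed

lemma has_integral_Union_pieces:
  fixes h :: "real \<Rightarrow> real"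
  assumes "sorted_wrt (<) xs" "length xs = Suc m" "\<And>j. j < m \<Longrightarrow> kf j < n"
    "\<And>j. j < m \<Longrightarrow> (h has_integral I j) (piece n (xs ! j) (xs ! (j + 1)) (kf j))"
  shows "(h has_integral (\<Sum>j<m. I j)) (\<Union>j<m. piece n (xs ! j) (xs ! (j + 1)) (kf j))"
proof (rule has_integral_UN)
  let ?P = "\<lambda>j. piece n (xs ! j) (xs ! (j + 1)) (kf j)"
  have "?P i \<inter> ?P j = {}" if "i < j" "j < m" for i j
  proof -
    have sub: "?P l \<subseteq> {xs ! l..<xs ! (l + 1)}" if "l < m" for l
      using that assms sorted_wrt_less_nth_mono[OF assms(1), of l "l + 1"]
      by (intro piece_subset) simp_all
    have "xs ! (i + 1) \<le> xs ! j"
      using sorted_wrt_less_nth_mono[OF assms(1)] that assms(2) by simp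
    then have "x < y" if "x \<in> ?P i" "y \<in> ?P j" for x y
      using sub[of i] sub[of j] that \<open>i < j\<close> \<open>j < m\<close> by fastforce
    then show ?thesis by blast
  qed
  then show "pairwise (\<lambda>i j. negligible (?P i \<inter> ?P j)) {..<m}"
    unfolding pairwise_def by (metis Int_commute lessThan_iff linorder_neqE_nat negligible_empty)
qed (use assms in auto)

lemma val_Union_pieces_eq_sum:
  fixes h :: "real \<Rightarrow> real"
  assumes "sorted_wrt (<) xs" "length xs = Suc m" "xs ! 0 = 0" "xs ! m = 1"
    "\<And>j. j < m \<Longrightarrow> kf j < n"
    "\<And>j. j < m \<Longrightarrow> (h has_integral P j) {xs ! j..xs ! (j + 1)}"
    "\<And>j. j < m \<Longrightarrow> (h has_integral Q j) (piece n (xs ! j) (xs ! (j + 1)) (kf j))"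
  shows "val h {0..1} = (\<Sum>j<m. P j)"
    and "val h (\<Union>j<m. piece n (xs ! j) (xs ! (j + 1)) (kf j)) = (\<Sum>j<m. Q j)"
  unfolding val_def
  using has_integral_sorted_intervals[OF assms(1,2,6)] has_integral_Union_pieces[OF assms(1,2,5,7)]
    assms(3,4) by (simp_all add: integral_unique)

lemma val_Union_pieces_fair:
  fixes h :: "real \<Rightarrow> real"
  assumes "sorted_wrt (<) xs" "length xs = Suc m" "xs ! 0 = 0" "xs ! m = 1"
    "\<And>j. j < m \<Longrightarrow> kf j < n"
    "\<And>j. j < m \<Longrightarrow> \<exists>c. const_off_finite h {xs ! j<..<xs ! (j + 1)} c"
  shows "val h (\<Union>j<m. piece n (xs ! j) (xs ! (j + 1)) (kf j)) = val h {0..1} / real n"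
proof -
  obtain C where C: "\<And>j. j < m \<Longrightarrow> const_off_finite h {xs ! j<..<xs ! (j + 1)} (C j)"
    using assms(6) by metis
  let ?P = "\<lambda>j. C j * (xs ! (j + 1) - xs ! j)"
  have le: "xs ! j \<le> xs ! (j + 1)" if "j < m" for j
    using sorted_wrt_less_nth_mono[OF assms(1)] that assms(2) by simp
  have "val h {0..1} = (\<Sum>j<m. ?P j)"
    "val h (\<Union>j<m. piece n (xs ! j) (xs ! (j + 1)) (kf j)) = (\<Sum>j<m. ?P j / real n)"
    by (rule val_Union_pieces_eq_sum[OF assms(1-5)];
        use le C assms(5) in \<open>auto intro: has_integral_const_off_finite has_integral_piece\<close>)+
  then show ?thesis by (simp add: sum_divide_distrib)
qed

lemma val_Union_pieces_less:
  fixes h :: "real \<Rightarrow> real"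
  assumes "sorted_wrt (<) xs" "length xs = Suc m" "xs ! 0 = 0" "xs ! m = 1"
    "\<And>j. j < m \<Longrightarrow> kf j < n" "i < m"
    "\<And>j. j < m \<Longrightarrow> j \<noteq> i \<Longrightarrow> \<exists>c. const_off_finite h {xs ! j<..<xs ! (j + 1)} c"
    "(h has_integral P) {xs ! i..xs ! (i + 1)}"
    "(h has_integral Q) (piece n (xs ! i) (xs ! (i + 1)) (kf i))" "Q < P / real n"
  shows "val h (\<Union>j<m. piece n (xs ! j) (xs ! (j + 1)) (kf j)) < val h {0..1} / real n"
proof -
  obtain C where C: "\<And>j. j < m \<Longrightarrow> j \<noteq> i \<Longrightarrow> const_off_finite h {xs ! j<..<xs ! (j + 1)} (C j)"
    using assms(7) by metis
  define P' where "P' j = (if j = i then P else C j * (xs ! (j + 1) - xs ! j))" for j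
  define Q' where "Q' j = (if j = i then Q else C j * (xs ! (j + 1) - xs ! j) / real n)" for j
  have le: "xs ! j \<le> xs ! (j + 1)" if "j < m" for j
    using sorted_wrt_less_nth_mono[OF assms(1)] that assms(2) by simp
  have "(h has_integral P' j) {xs ! j..xs ! (j + 1)}" if "j < m" for j
    using that le C assms(8) by (auto simp: P'_def intro: has_integral_const_off_finite)
  moreover have "(h has_integral Q' j) (piece n (xs ! j) (xs ! (j + 1)) (kf j))" if "j < m" for j
    using that le C assms(5,9) by (auto simp: Q'_def intro: has_integral_piece)
  ultimately have "val h {0..1} = (\<Sum>j<m. P' j)"
    "val h (\<Union>j<m. piece n (xs ! j) (xs ! (j + 1)) (kf j)) = (\<Sum>j<m. Q' j)"
    using val_Union_pieces_eq_sum[where P = P' and Q = Q' and kf = kf, OF assms(1-5)] by blast+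
  moreover have "(\<Sum>j<m. Q' j) < (\<Sum>j<m. P' j / real n)"
    by (rule sum_strict_mono_ex1) (use assms(6,10) in \<open>auto simp: P'_def Q'_def\<close>)
  ultimately show ?thesis by (simp add: sum_divide_distrib)
qed

section \<open>Breakpoints\<close>

definition reported_points :: "nat \<Rightarrow> (nat \<Rightarrow> real \<Rightarrow> real) \<Rightarrow> real set" where
  "reported_points n fs = (\<Union>i\<in>{1..n}. disc_points (fs i))"

lemma breakpoints_props:
  assumes "\<forall>i\<in>{1..n}. piecewise_const_density (fs i)"
  defines "xs \<equiv> breakpoints n fs" and "m \<equiv> Suc (card (reported_points n fs))"
  shows "sorted_wrt (<) xs" "length xs = Suc m" "xs ! 0 = 0" "xs ! m = 1"
    "set xs = insert 0 (insert 1 (reported_points n fs))"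
proof -
  have fin: "finite (reported_points n fs)" and sub: "reported_points n fs \<subseteq> {0<..<1}"
    using assms(1) finite_disc_points unfolding reported_points_def disc_points_def by auto
  have xs: "xs = [0] @ sorted_list_of_set (reported_points n fs) @ [1]"
    unfolding xs_def breakpoints_def reported_points_def ..
  show "sorted_wrt (<) xs"
    using fin sub strict_sorted_list_of_set unfolding xs by (auto simp: sorted_wrt_append)
  show "length xs = Suc m" "xs ! 0 = 0" "xs ! m = 1"
    unfolding xs m_def using fin by (simp_all add: nth_append)
  show "set xs = insert 0 (insert 1 (reported_points n fs))"
    unfolding xs using fin by auto
qed

lemma breakpoints_interval_bounds:
  assumes "\<forall>i\<in>{1..n}. piecewise_const_density (fs i)" "j + 1 < length (breakpoints n fs)"
  shows "0 \<le> breakpoints n fs ! j" "breakpoints n fs ! (j + 1) \<le> 1"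
  using breakpoints_props[OF assms(1)] assms(2)
    sorted_wrt_less_nth_mono[of "breakpoints n fs" 0 j]
    sorted_wrt_less_nth_mono[of "breakpoints n fs" "j + 1" "Suc (card (reported_points n fs))"]
  by auto

lemma breakpoints_consecutive:
  assumes "\<forall>i\<in>{1..n}. piecewise_const_density (fs i)"
    "a \<in> reported_points n fs" "b \<in> reported_points n fs" "a < b"
    "reported_points n fs \<inter> {a<..<b} = {}"
  defines "j \<equiv> Suc (card {p \<in> reported_points n fs. p < a})"
  shows "j + 1 < length (breakpoints n fs)" "breakpoints n fs ! j = a"
    "breakpoints n fs ! (j + 1) = b"
proof -
  let ?xs = "breakpoints n fs" and ?U = "reported_points n fs"
  note props = breakpoints_props[OF assms(1)]
  have U01: "?U \<subseteq> {0<..<1}"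
    using assms(1) unfolding reported_points_def disc_points_def by auto
  have "0 < a" "b < 1" using U01 assms(2,3) by auto
  have a_in: "a \<in> set ?xs" and b_in: "b \<in> set ?xs" using props(5) assms(2,3) by simp_all
  have "{p \<in> set ?xs. p < a} = insert 0 {p \<in> ?U. p < a}"
    using props(5) \<open>0 < a\<close> \<open>a < b\<close> \<open>b < 1\<close> by auto
  moreover have "finite {p \<in> ?U. p < a}" "0 \<notin> ?U"
    using assms(1) finite_disc_points U01 unfolding reported_points_def by auto
  ultimately have card_a: "card {p \<in> set ?xs. p < a} = j"
    unfolding j_def by simp
  then show "?xs ! j = a"
    using nth_card_less_sorted(2)[OF props(1) a_in] by simp
  have "p \<le> a" if "p \<in> set ?xs" "p < b" for p
    using that props(5) assms(5) \<open>0 < a\<close> \<open>b < 1\<close> by (auto simp: not_less)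
  then have "{p \<in> set ?xs. p < b} = insert a {p \<in> set ?xs. p < a}"
    using a_in \<open>a < b\<close> by fastforce
  then have "card {p \<in> set ?xs. p < b} = j + 1"
    using card_a by simp
  then show "j + 1 < length ?xs" "?xs ! (j + 1) = b"
    using nth_card_less_sorted[OF props(1) b_in] by simp_all
qed

lemma breakpoints_interval_const:
  fixes f :: "real \<Rightarrow> real"
  assumes "\<forall>i\<in>{1..n}. piecewise_const_density (fs i)" "changes_only_at S f 0 1"
    "l + 1 < length (breakpoints n fs)"
    "S \<inter> {breakpoints n fs ! l<..<breakpoints n fs ! (l + 1)} \<subseteq> reported_points n fs"
  shows "\<exists>c. const_off_finite f {breakpoints n fs ! l<..<breakpoints n fs ! (l + 1)} c"
proof (rule changes_only_at_const_off_finite)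
  show "changes_only_at S f (breakpoints n fs ! l) (breakpoints n fs ! (l + 1))"
    using changes_only_at_mono[OF assms(2) breakpoints_interval_bounds[OF assms(1,3)] Int_lower1] .
  show "S \<inter> {breakpoints n fs ! l<..<breakpoints n fs ! (l + 1)} = {}"
    using assms(4) sorted_nth_gap[OF breakpoints_props(1)[OF assms(1)] assms(3)]
      breakpoints_props(5)[OF assms(1)] by blast
qed

lemma reported_points_fun_upd:
  assumes "n \<ge> 2" "i \<in> {1..n}"
  shows "reported_points n ((\<lambda>_. g)(i := f')) = disc_points f' \<union> disc_points g"
proof -
  have "(if i = 1 then 2 else 1) \<in> {1..n} - {i}" using assms by auto
  then obtain l where l: "l \<in> {1..n}" "((\<lambda>_. g)(i := f')) l = g" by auto
  show ?thesis
  proof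
    show "reported_points n ((\<lambda>_. g)(i := f')) \<subseteq> disc_points f' \<union> disc_points g"
      unfolding reported_points_def by (auto split: if_splits)
    show "disc_points f' \<union> disc_points g \<subseteq> reported_points n ((\<lambda>_. g)(i := f'))"
      unfolding reported_points_def
      using UN_upper[OF assms(2), of "\<lambda>l. disc_points (((\<lambda>_. g)(i := f')) l)"]
        UN_upper[OF l(1), of "\<lambda>l. disc_points (((\<lambda>_. g)(i := f')) l)"] l(2) by simp
  qed
qed

section \<open>Envy-freeness\<close>

lemma val_alg2_fair_share:
  fixes h :: "real \<Rightarrow> real"
  assumes "\<forall>i\<in>{1..n}. piecewise_const_density (fs i)" "n > 0"
    "\<And>j. j + 1 < length (breakpoints n fs) \<Longrightarrow>
       \<exists>c. const_off_finite h {breakpoints n fs ! j<..<breakpoints n fs ! (j + 1)} c"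
  shows "val h (alg2 n fs p) = val h {0..1} / real n"
  unfolding alg2_eq_Union_piece Let_def
  using val_Union_pieces_fair[OF breakpoints_props(1-4)[OF assms(1)]] assms(2,3)
    breakpoints_props(2)[OF assms(1)] by simp

lemma val_alg2_fair_share_if_reported:
  fixes h :: "real \<Rightarrow> real"
  assumes "\<forall>i\<in>{1..n}. piecewise_const_density (fs i)" "n > 0"
    "piecewise_const_density h" "disc_points h \<subseteq> reported_points n fs"
  shows "val h (alg2 n fs p) = val h {0..1} / real n"
proof (rule val_alg2_fair_share[OF assms(1,2)])
  fix j assume j: "j + 1 < length (breakpoints n fs)"
  let ?xs = "breakpoints n fs"
  have "disc_points h \<inter> {?xs ! j<..<?xs ! (j + 1)} = {}"
    using sorted_nth_gap[OF breakpoints_props(1)[OF assms(1)] j] assms(4)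
      breakpoints_props(5)[OF assms(1)] by blast
  then show "\<exists>c. const_off_finite h {?xs ! j<..<?xs ! (j + 1)} c"
    using piecewise_const_density_const_or_jump[OF assms(3) breakpoints_interval_bounds[OF assms(1) j]]
    by blast
qed

lemma alg2_envy_free:
  assumes "n > 0"
  shows "envy_free_mech n (alg2 n)"
  unfolding envy_free_mech_def
proof (intro allI impI ballI)
  fix fs i j assume pc: "\<forall>i\<in>{1..n}. piecewise_const_density (fs i)" and i: "i \<in> {1..n}"
  have "disc_points (fs i) \<subseteq> reported_points n fs"
    using i unfolding reported_points_def by auto
  then have "val (fs i) (alg2 n fs p) = val (fs i) {0..1} / real n" for p
    using val_alg2_fair_share_if_reported[OF pc assms] pc i by blast
  then show "val (fs i) (alg2 n fs j) \<le> val (fs i) (alg2 n fs i)" by simp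
qed

section \<open>Risk-averse truthfulness\<close>

lemma jump_share_less:
  fixes L R :: real and n k :: nat
  assumes "n \<ge> 2" "w > 0" "L \<noteq> R" "k = (if R < L then n - 1 else 0)"
  shows "L * (w / 2) + R * (w / 2)
    < (L * ((real k + 1 / 2) * w) + R * ((real n - real k - 1 / 2) * w)) / real n"
proof -
  have "(L * ((real k + 1 / 2) * w) + R * ((real n - real k - 1 / 2) * w))
          - real n * (L * (w / 2) + R * (w / 2))
        = w * \<bar>L - R\<bar> * (real n - 1) / 2"
    using assms(1,4) by (cases "R < L") (simp_all add: of_nat_diff algebra_simps)
  moreover have "w * \<bar>L - R\<bar> * (real n - 1) / 2 > 0"
    using assms(1-3) by simp
  ultimately show ?thesis
    using assms(1) by (simp add: field_simps)
qed

(* Piece k is centred at the jump d and sits at the end of [a,b] on the side of the smaller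
   value, so the other pieces hold more than their share of the larger value. *)
lemma jump_piece_share_less:
  fixes f :: "real \<Rightarrow> real"
  assumes "n \<ge> 2" "a < b" "L \<noteq> R" "k = (if R < L then n - 1 else 0)"
    "d = a + (real k + 1 / 2) * (b - a) / real n"
    "const_off_finite f {a<..<d} L" "const_off_finite f {d<..<b} R"
  obtains P Q where "(f has_integral P) {a..b}" "(f has_integral Q) (piece n a b k)" "Q < P / real n"
proof -
  define w where "w = (b - a) / real n"
  define lo hi where "lo = a + real k * w" and "hi = a + (real k + 1) * w"
  have w: "w > 0" "real n * w = b - a" using assms(1,2) unfolding w_def by auto
  have "d - a = (real k + 1 / 2) * w" using assms(5) unfolding w_def by simp
  then have d: "d - a = (real k + 1 / 2) * w" "d - lo = w / 2" "hi - d = w / 2"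
    unfolding lo_def hi_def by (simp_all add: algebra_simps)
  have "(real k + 1) * w \<le> real n * w" using assms(1,4) w(1) by (intro mult_right_mono) auto
  then have bounds: "a \<le> lo" "lo \<le> d" "d \<le> hi" "hi \<le> b"
    using w d unfolding lo_def hi_def by (simp_all add: algebra_simps)
  have whole: "(f has_integral L * (d - a) + R * (b - d)) {a..b}"
    using has_integral_step[OF _ _ assms(6,7)] bounds by simp
  have "const_off_finite f {lo<..<d} L" "const_off_finite f {d<..<hi} R"
    using bounds by (auto intro: const_off_finite_subset[OF assms(6)] const_off_finite_subset[OF assms(7)])
  then have "(f has_integral L * (d - lo) + R * (hi - d)) {lo..hi}"
    using has_integral_step bounds(2,3) by blast
  moreover have "piece n a b k = {lo..<hi}"
    unfolding piece_def lo_def hi_def w_def by (simp add: field_simps)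
  ultimately have part: "(f has_integral L * (w / 2) + R * (w / 2)) (piece n a b k)"
    using d(2,3) by (simp add: has_integral_atLeastLessThan_iff)
  have "b - d = (real n - real k - 1 / 2) * w"
    using d(1) w(2) by (simp add: algebra_simps)
  then have "L * (w / 2) + R * (w / 2) < (L * (d - a) + R * (b - d)) / real n"
    using jump_share_less[OF assms(1) w(1) assms(3,4)] d(1) by simp
  with whole part show ?thesis using that by blast
qed

lemma exists_interval_avoiding:
  fixes d e :: real
  assumes "open U" "finite V" "d \<in> U - V" "e > 0"
  obtains r where "r > 0" "r \<le> e" "{d - r<..<d + r} \<subseteq> U - V"
proof -
  have "open (U - V)" using assms(1,2) by (intro open_Diff finite_imp_closed)
  then obtain r where "r > 0" "ball d r \<subseteq> U - V"
    using assms(3) by (rule openE)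
  moreover have "{d - min r e<..<d + min r e} \<subseteq> ball d r"
    by (auto simp: ball_eq_greaterThanLessThan)
  ultimately show ?thesis using that[of "min r e"] assms(4) by auto
qed

lemma val_alg2_below_share_if_jump_centred:
  fixes f f' :: "real \<Rightarrow> real"
  assumes "n \<ge> 2" "i \<in> {1..n}" "piecewise_const_density f'"
    and S: "finite S" "changes_only_at S f 0 1"
    and D: "finite D" "D \<subseteq> {0<..<1}" "disc_points f' \<subseteq> D" "S \<inter> {0<..<1} \<subseteq> insert d D"
    and ab: "a \<in> D" "b \<in> D" "a < b" "D \<inter> {a<..<b} = {}" "d \<in> {a<..<b}"
    and k: "k = (if R < L then n - 1 else 0)" "(i + card {p \<in> D. p < a}) mod n = k"
    and jump: "L \<noteq> R" "d = a + (real k + 1 / 2) * (b - a) / real n"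
      "const_off_finite f {a<..<d} L" "const_off_finite f {d<..<b} R"
  shows "val f (alg2 n ((\<lambda>_. count_below D)(i := f')) i) < val f {0..1} / real n"
proof -
  define fs where "fs = (\<lambda>_. count_below D)(i := f')"
  define xs where "xs = breakpoints n fs"
  have pc: "\<forall>l\<in>{1..n}. piecewise_const_density (fs l)"
    unfolding fs_def using assms(3) piecewise_const_density_count_below[OF D(1)] by simp
  have reported: "reported_points n fs = D"
    unfolding fs_def using reported_points_fun_upd[OF assms(1,2)] disc_points_count_below[OF D(1,2)] D(3)
    by auto
  note props = breakpoints_props[OF pc, folded xs_def, unfolded reported]
  define j where "j = Suc (card {p \<in> D. p < a})"
  have j: "j + 1 < length xs" "xs ! j = a" "xs ! (j + 1) = b"
    using breakpoints_consecutive[OF pc, unfolded reported, OF ab(1-4)] unfolding xs_def j_def by auto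
  have kj: "(i + j - 1) mod n = k" using k(2) unfolding j_def by simp
  have others: "\<exists>c. const_off_finite f {xs ! l<..<xs ! (l + 1)} c"
    if l: "l < Suc (card D)" "l \<noteq> j" for l
  proof -
    have l1: "l + 1 < length xs" using l props(2) by simp
    have "d \<notin> {xs ! l<..<xs ! (l + 1)}"
      using sorted_nth_gaps_disjoint[OF props(1) l1 j(1)] ab(5) j(2,3) l(2) by auto
    then have "S \<inter> {xs ! l<..<xs ! (l + 1)} \<subseteq> reported_points n fs"
      using D(4) breakpoints_interval_bounds[OF pc l1[unfolded xs_def]] reported
      unfolding xs_def by force
    then show ?thesis
      using breakpoints_interval_const[OF pc S(2) l1[unfolded xs_def]] unfolding xs_def by blast
  qed
  obtain P Q where PQ: "(f has_integral P) {a..b}" "(f has_integral Q) (piece n a b k)" "Q < P / real n"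
    using jump_piece_share_less[OF assms(1) ab(3) jump(1) k(1) jump(2-4)] .
  have "val f (\<Union>l<Suc (card D). piece n (xs ! l) (xs ! (l + 1)) ((i + l - 1) mod n)) < val f {0..1} / real n"
    by (rule val_Union_pieces_less[OF props(1-4), where i = j])
      (use assms(1) j props(2) kj others PQ in auto)
  then show ?thesis
    unfolding alg2_eq_Union_piece Let_def fs_def[symmetric] xs_def[symmetric] props(2) by simp
qed

lemma centred_window:
  fixes d \<delta> :: real
  assumes "n \<ge> 2" "k < n" "\<delta> > 0"
  obtains a b where "d - \<delta> < a" "a < d" "d < b" "b < d + \<delta>"
    "d = a + (real k + 1 / 2) * (b - a) / real n"
proof -
  define a where "a = d - (real k + 1 / 2) * (\<delta> / real n)"
  have "real (k + 1) \<le> real n" using assms(2) by simp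
  then have "(real k + 1 / 2) * (\<delta> / real n) < real n * (\<delta> / real n)"
    using assms(1,3) by (intro mult_strict_right_mono) auto
  then have "(real k + 1 / 2) * (\<delta> / real n) < \<delta>"
    using assms(1) by simp
  then have "d - \<delta> < a" "a < d" "d < a + \<delta>" "a + \<delta> < d + \<delta>"
    using assms unfolding a_def by auto
  moreover have "d = a + (real k + 1 / 2) * ((a + \<delta>) - a) / real n"
    unfolding a_def by simp
  ultimately show ?thesis using that by blast
qed

lemma mod_add_complement:
  fixes x k n :: nat
  assumes "k < n"
  shows "(x + (k + n - x mod n) mod n) mod n = k"
proof -
  have "(x + (k + n - x mod n) mod n) mod n = (x mod n + (k + n - x mod n)) mod n"
    by (simp add: mod_add_left_eq mod_add_right_eq)
  also have "x mod n + (k + n - x mod n) = k + n"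
    using assms mod_less_divisor[of n x] by linarith
  finally show ?thesis using assms by simp
qed

lemma card_less_with_decoys:
  fixes V E :: "real set"
  assumes "finite V" "finite E" "V \<inter> {u<..<d} = {}" "E \<subseteq> {u<..<a}" "u < a" "a < d" "a < b"
  shows "card {p \<in> V \<union> {a, b} \<union> E. p < a} = card {p \<in> V. p < d} + card E"
proof -
  have "p < a" if "p \<in> V" "p < d" for p
    using that assms(3,5) by (meson disjoint_iff greaterThanLessThan_iff not_le order.strict_trans1)
  then have "{p \<in> V \<union> {a, b} \<union> E. p < a} = {p \<in> V. p < d} \<union> E"
    using assms(4,6,7) by auto
  moreover have "E \<subseteq> {u<..<d}" using assms(4,6) by auto
  then have "{p \<in> V. p < d} \<inter> E = {}" using assms(3) by blast
  ultimately show ?thesis using assms(1,2) by (simp add: card_Un_disjoint)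
qed

lemma unreported_jump_imp_profile_below_share:
  fixes f f' :: "real \<Rightarrow> real"
  assumes "n \<ge> 2" "i \<in> {1..n}" "piecewise_const_density f" "piecewise_const_density f'"
    "d \<in> {0<..<1}" "d \<notin> disc_points f'" "jump_at f d"
  shows "\<exists>fs. (\<forall>j\<in>{1..n} - {i}. piecewise_const_density (fs j)) \<and>
           val f (alg2 n (fs(i := f')) i) < 1 / real n * val f {0..1}"
proof -
  obtain S where S: "finite S" "changes_only_at S f 0 1"
    using piecewise_const_density_changes_only_at[OF assms(3)] .
  obtain e L R where e: "e > 0" "L \<noteq> R"
    and L: "const_off_finite f {d - e<..<d} L" and R: "const_off_finite f {d<..<d + e} R"
    using assms(7) unfolding jump_at_def by blast
  define V where "V = (disc_points f' \<union> S \<inter> {0<..<1}) - {d}"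
  have V: "finite V" "V \<subseteq> {0<..<1}"
    using finite_disc_points[OF assms(4)] S(1) unfolding V_def disc_points_def by auto
  obtain r where r: "r > 0" "r \<le> e" "{d - r<..<d + r} \<subseteq> {0<..<1} - V"
    using exists_interval_avoiding[OF open_greaterThanLessThan[of 0 1] V(1), where d = d and e = e]
      assms(5) e(1) unfolding V_def by blast
  have near: "{d - r<..<d + r} \<subseteq> {0<..<1}" "V \<inter> {d - r<..<d + r} = {}"
    using r(3) by blast+
  define \<delta> where "\<delta> = r / 2"
  define k where "k = (if R < L then n - 1 else 0)"
  have "k < n" using assms(1) unfolding k_def by auto
  then obtain a b where ab: "d - \<delta> < a" "a < d" "d < b" "b < d + \<delta>"
    and d: "d = a + (real k + 1 / 2) * (b - a) / real n"
    using centred_window[OF assms(1)] r(1) unfolding \<delta>_def by (metis half_gt_zero)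
  define c where "c = card {p \<in> V. p < d}"
  \<comment> \<open>Decoy breakpoints left of a: their number rotates the cyclic assignment so that
      agent i receives piece k of [a,b].\<close>
  obtain E where E: "E \<subseteq> {d - r<..<d - \<delta>}" "finite E" "card E = (k + n - (i + c) mod n) mod n"
    using infinite_arbitrarily_large[OF infinite_Ioo, of "d - r" "d - \<delta>"] r(1)
    unfolding \<delta>_def by auto
  define D where "D = V \<union> {a, b} \<union> E"
  have "V \<inter> {d - r<..<d} = {}" "E \<subseteq> {d - r<..<a}" "d - r < a" "a < b"
    using near(2) E(1) ab r(1) unfolding \<delta>_def by auto
  then have "card {p \<in> D. p < a} = c + card E"
    unfolding D_def c_def using card_less_with_decoys[OF V(1) E(2) _ _ _ ab(2)] by blast
  then have "(i + card {p \<in> D. p < a}) mod n = k"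
    using mod_add_complement[of k n "i + c"] E(3) assms(1) unfolding k_def by (simp add: add.assoc)
  moreover note d
  moreover have "const_off_finite f {a<..<d} L" "const_off_finite f {d<..<b} R"
    using ab r(2) unfolding \<delta>_def
    by (auto intro: const_off_finite_subset[OF L] const_off_finite_subset[OF R])
  moreover have "{a, b} \<union> E \<subseteq> {d - r<..<d + r}"
    using E(1) ab unfolding \<delta>_def by auto
  then have "D \<subseteq> {0<..<1}" using V(2) near(1) unfolding D_def by blast
  moreover have "finite D" "disc_points f' \<subseteq> D" "S \<inter> {0<..<1} \<subseteq> insert d D"
    using V(1) E(2) assms(6) unfolding D_def V_def by auto
  moreover have "D \<inter> {a<..<b} = {}"
    using r(3) E(1) ab unfolding D_def \<delta>_def by force
  ultimately have "val f (alg2 n ((\<lambda>_. count_below D)(i := f')) i) < val f {0..1} / real n"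
    using val_alg2_below_share_if_jump_centred[OF assms(1,2,4) S, of D d a b k R L] ab e(2) k_def
    unfolding D_def by auto
  moreover have "\<forall>j\<in>{1..n} - {i}. piecewise_const_density (count_below D)"
    using piecewise_const_density_count_below \<open>finite D\<close> by blast
  ultimately show ?thesis by (intro exI[of _ "\<lambda>_. count_below D"]) simp
qed

lemma unreported_jump_if_not_share:
  fixes f :: "real \<Rightarrow> real"
  assumes "\<forall>l\<in>{1..n}. piecewise_const_density (fs l)" "n > 0" "piecewise_const_density f"
    "val f (alg2 n fs p) \<noteq> val f {0..1} / real n"
  shows "\<exists>d\<in>{0<..<1}. d \<notin> reported_points n fs \<and> jump_at f d"
proof -
  let ?xs = "breakpoints n fs"
  obtain j where j: "j + 1 < length ?xs"
    and "\<not> (\<exists>c. const_off_finite f {?xs ! j<..<?xs ! (j + 1)} c)"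
    using val_alg2_fair_share[OF assms(1,2)] assms(4) by blast
  then obtain d where d: "d \<in> {?xs ! j<..<?xs ! (j + 1)}" "jump_at f d"
    using piecewise_const_density_const_or_jump[OF assms(3) breakpoints_interval_bounds[OF assms(1) j]]
    by blast
  have "d \<notin> reported_points n fs"
    using sorted_nth_gap[OF breakpoints_props(1)[OF assms(1)] j] breakpoints_props(5)[OF assms(1)] d(1)
    by blast
  moreover have "d \<in> {0<..<1}"
    using d(1) breakpoints_interval_bounds[OF assms(1) j] by auto
  ultimately show ?thesis using d(2) by blast
qed

lemma alg2_risk_averse_truthful:
  assumes "n \<ge> 2"
  shows "risk_averse_truthful n (alg2 n)"
  unfolding risk_averse_truthful_def
proof (intro ballI allI impI)
  fix i f f' assume i: "i \<in> {1..n}"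
    and f: "piecewise_const_density f" and f': "piecewise_const_density f'"
  have n: "n > 0" using assms by simp
  let ?others = "\<lambda>fs. \<forall>j\<in>{1..n} - {i}. piecewise_const_density (fs j)"
  have profile: "\<forall>l\<in>{1..n}. piecewise_const_density ((fs(i := g)) l)"
    if "?others fs" "piecewise_const_density g" for fs g
    using that by auto
  have reported: "disc_points g \<subseteq> reported_points n (fs(i := g))" for fs g
    using UN_upper[OF i, of "\<lambda>l. disc_points ((fs(i := g)) l)"]
    unfolding reported_points_def by simp
  have truthful: "val f (alg2 n (fs(i := f)) i) = val f {0..1} / real n" if "?others fs" for fs
    using val_alg2_fair_share_if_reported[OF profile[OF that f] n f reported] .
  show "(\<forall>fs. ?others fs \<longrightarrow> val f (alg2 n (fs(i := f')) i) \<le> val f (alg2 n (fs(i := f)) i)) \<or>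
        (\<exists>fs. ?others fs \<and> val f (alg2 n (fs(i := f')) i) < 1 / real n * val f {0..1})"
  proof (cases "\<forall>fs. ?others fs \<longrightarrow> val f (alg2 n (fs(i := f')) i) \<le> val f {0..1} / real n")
    case True
    then show ?thesis using truthful by simp
  next
    case False
    then obtain fs where fs: "?others fs" "\<not> val f (alg2 n (fs(i := f')) i) \<le> val f {0..1} / real n"
      by blast
    then have "val f (alg2 n (fs(i := f')) i) \<noteq> val f {0..1} / real n" by simp
    then obtain d where d: "d \<in> {0<..<1}" "d \<notin> reported_points n (fs(i := f'))" "jump_at f d"
      using unreported_jump_if_not_share[OF profile[OF fs(1) f'] n f] by blast
    have "d \<notin> disc_points f'" using d(2) reported by blast
    from unreported_jump_imp_profile_below_share[OF assms i f f' d(1) this d(3)] show ?thesis ..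
  qed
qed

theorem mainTheorem6:
  fixes n :: nat
  assumes "n \<ge> 2"
  shows "envy_free_mech n (alg2 n) \<and> risk_averse_truthful n (alg2 n)"
  using alg2_envy_free alg2_risk_averse_truthful assms by simp

end
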